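(* Let $p\ge 1$ and let $w(0),\ldots,w(p)$ be positive weights. For $p\times p$ orthogonal projectors $P_1,P_2$ (i.e. real matrices with $P_i=P_i'=P_i^2$, where the zero matrix is allowed as a projector of rank $0$) with ranks $k_1,k_2\in\{0,\ldots,p\}$, define \[ D_w^2(P_1,P_2)=\tfrac12\,\|w(k_1)P_1-w(k_2)P_2\|^2, \] where $\|\cdot\|$ is the Frobenius norm, and $D_w(P_1,P_2)\ge 0$ its square root. Then for every choice of positive weights $w$, $D_w$ is a metric on the set of $p\times p$ orthogonal projectors. Moreover, with \[ m(k_1,k_2)=\frac{w^2(k_1)k_1+w^2(k_2)k_2}{2}, \] for all orthogonal projectors $P_1,P_2$ of ranks $k_1,k_2$, \[ m(k_1,k_2)-w(k_1)w(k_2)\min\{k_1,k_2\}\;\le\; D_w^2(P_1,P_2)\;\le\; m(k_1,k_2)+w(k_1)w(k_2)\min\{p-k_1-k_2,0\}, \] and these bounds are sharp, i.e. for given $k_1,k_2$ each bound is attained by some pair of orthogonal projectors of ranks $k_1,k_2$.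
   Context: An orthogonal projector is a $p\times p$ real matrix $P$ with $P=P'=P^2$; its rank equals its trace. The Frobenius norm is $\|A\|^2=\mathrm{tr}(A'A)$. *)

theory Defs
  imports "HOL-Analysis.Analysis"
begin

definition orth_proj :: "real^'n^'n \<Rightarrow> bool" where
  "orth_proj P \<longleftrightarrow> transpose P = P \<and> P ** P = P"

definition frob_sq :: "real^'n^'n \<Rightarrow> real" where
  "frob_sq A = trace (transpose A ** A)"

definition Dw_sq :: "(nat \<Rightarrow> real) \<Rightarrow> real^'n^'n \<Rightarrow> real^'n^'n \<Rightarrow> real" where
  "Dw_sq w P1 P2 = frob_sq (w (rank P1) *\<^sub>R P1 - w (rank P2) *\<^sub>R P2) / 2"

definition Dw :: "(nat \<Rightarrow> real) \<Rightarrow> real^'n^'n \<Rightarrow> real^'n^'n \<Rightarrow> real" where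
  "Dw w P1 P2 = sqrt (Dw_sq w P1 P2)"

definition mw :: "(nat \<Rightarrow> real) \<Rightarrow> nat \<Rightarrow> nat \<Rightarrow> real" where
  "mw w k1 k2 = ((w k1)\<^sup>2 * real k1 + (w k2)\<^sup>2 * real k2) / 2"

end

theory Submission
  imports Defs
begin

text \<open>Viewed as vectors, matrices carry the Frobenius inner product \<open>A \<bullet> B = tr(A'B)\<close>, so
  \<open>D\<^sub>w(P,Q)\<close> is \<open>1/\<surd>2\<close> times the Euclidean distance between \<open>w(rank P) P\<close> and
  \<open>w(rank Q) Q\<close>; it is a metric because \<open>P \<mapsto> w(rank P) P\<close> is injective on projectors.
  Expanding the square gives \<open>D\<^sub>w\<^sup>2 = m(k\<^sub>1,k\<^sub>2) - w(k\<^sub>1) w(k\<^sub>2) (P\<^sub>1 \<bullet> P\<^sub>2)\<close>, and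
  \<open>max 0 (k\<^sub>1 + k\<^sub>2 - p) \<le> P\<^sub>1 \<bullet> P\<^sub>2 \<le> min k\<^sub>1 k\<^sub>2\<close> follows from
  \<open>P \<bullet> Q = \<parallel>PQ\<parallel>\<^sup>2 \<ge> 0\<close> applied to \<open>P\<^sub>1\<close>, \<open>P\<^sub>2\<close> and their complements \<open>I - P\<^sub>i\<close>, together with
  \<open>P \<bullet> P = tr P = rank P\<close>. Coordinate projectors onto index sets whose intersection has
  either extreme size attain both bounds.\<close>

lemma symmetric_matrix_inner_commute:
  fixes A :: "real^'n^'n"
  assumes "transpose A = A"
  shows "(A *v x) \<bullet> y = x \<bullet> (A *v y)"
  by (metis assms dot_lmul_matrix transpose_matrix_vector)

lemma inner_matrix_eq_trace:
  fixes A B :: "real^'n^'m"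
  shows "A \<bullet> B = trace (transpose A ** B)"
  unfolding inner_vec_def trace_def matrix_matrix_mult_def transpose_def
  by (simp add: sum.swap[of _ "UNIV::'m set"])

lemma transpose_diff: "transpose (A - B) = transpose A - (transpose B :: 'a::ab_group_add^'n^'m)"
  by (simp add: transpose_def vec_eq_iff)

lemma matrix_diff_ldistrib: "A ** (B - C) = A ** B - A ** (C :: 'a::ring_1^'p^'n)"
  by (simp add: matrix_matrix_mult_def vec_eq_iff sum_subtractf algebra_simps)

lemma matrix_diff_rdistrib: "(A - B) ** C = A ** C - (B :: 'a::ring_1^'n^'m) ** C"
  by (simp add: matrix_matrix_mult_def vec_eq_iff sum_subtractf algebra_simps)

lemma rank_le_CARD: "rank (A :: real^'n^'m) \<le> CARD('n)"
  using rank_bound[of A] by simp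

lemma orth_proj_orthonormal_expansion:
  fixes P :: "real^'n^'n"
  assumes "orth_proj P"
  obtains U where "finite U" "\<And>u. u \<in> U \<Longrightarrow> u \<bullet> u = 1" "card U = rank P"
    "\<And>x. P *v x = (\<Sum>u\<in>U. (x \<bullet> u) *\<^sub>R u)"
proof -
  have sym: "transpose P = P" and idem: "P ** P = P" using assms by (auto simp: orth_proj_def)
  define V where "V = range ((*v) P)"
  have "subspace V"
    unfolding V_def by (rule linear_subspace_image[OF matrix_vector_mul_linear subspace_UNIV])
  then obtain U where U: "U \<subseteq> V" "pairwise orthogonal U" "\<And>x. x \<in> U \<Longrightarrow> norm x = 1"
    "independent U" "card U = dim V" "span U = V"
    using orthonormal_basis_subspace by blast
  have "finite U" using U(4) by (rule independent_imp_finite)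
  have fixed: "P *v u = u" if "u \<in> U" for u
  proof -
    obtain y where "u = P *v y" using U(1) \<open>u \<in> U\<close> unfolding V_def by blast
    then show ?thesis by (simp add: matrix_vector_mul_assoc idem)
  qed
  have "P *v x = (\<Sum>u\<in>U. (x \<bullet> u) *\<^sub>R u)" for x
  proof -
    have "P *v x \<in> span U" using U(6) unfolding V_def by blast
    then have "P *v x = (\<Sum>u\<in>U. ((P *v x) \<bullet> u) *\<^sub>R u)"
      using orthonormal_basis_expand[OF U(2) U(3) _ \<open>finite U\<close>] by simp
    also have "\<dots> = (\<Sum>u\<in>U. (x \<bullet> u) *\<^sub>R u)"
      by (intro sum.cong refl) (simp add: symmetric_matrix_inner_commute[OF sym] fixed)
    finally show ?thesis .
  qed
  moreover have "u \<bullet> u = 1" if "u \<in> U" for u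
    using U(3)[OF that] by (simp add: norm_eq_1)
  moreover have "card U = rank P" using U(5) by (simp add: rank_dim_range V_def)
  ultimately show ?thesis using that \<open>finite U\<close> by blast
qed

lemma orth_proj_trace:
  fixes P :: "real^'n^'n"
  assumes "orth_proj P"
  shows "trace P = real (rank P)"
proof -
  obtain U where U: "finite U" "\<And>u. u \<in> U \<Longrightarrow> u \<bullet> u = 1" "card U = rank P"
    "\<And>x. P *v x = (\<Sum>u\<in>U. (x \<bullet> u) *\<^sub>R u)"
    using orth_proj_orthonormal_expansion[OF assms] by blast
  have diag: "P$i$i = (\<Sum>u\<in>U. u$i * u$i)" for i
  proof -
    have "P$i$i = (P *v axis i 1)$i" by (simp add: matrix_vector_mult_basis column_def)
    then show ?thesis by (simp add: U(4) inner_axis')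
  qed
  have "trace P = (\<Sum>u\<in>U. u \<bullet> u)"
    unfolding trace_def diag inner_vec_def inner_real_def by (rule sum.swap)
  also have "\<dots> = real (card U)" using U(2) by simp
  finally show ?thesis using U(3) by simp
qed

lemma orth_proj_inner_nonneg:
  fixes P Q :: "real^'n^'n"
  assumes "orth_proj P" and "orth_proj Q"
  shows "P \<bullet> Q \<ge> 0"
proof -
  have P: "transpose P = P" "P ** P = P" and Q: "transpose Q = Q" "Q ** Q = Q"
    using assms by (auto simp: orth_proj_def)
  have "P \<bullet> Q = trace ((P ** P) ** (Q ** Q))" by (simp add: inner_matrix_eq_trace P Q)
  also have "\<dots> = trace ((P ** P ** Q) ** Q)" by (simp add: matrix_mul_assoc)
  also have "\<dots> = trace (Q ** (P ** P ** Q))" by (rule trace_mul_sym)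
  also have "\<dots> = trace (transpose (P ** Q) ** (P ** Q))"
    by (simp add: matrix_transpose_mul matrix_mul_assoc P(1) Q(1))
  also have "\<dots> = (P ** Q) \<bullet> (P ** Q)" by (rule inner_matrix_eq_trace[symmetric])
  finally show ?thesis by simp
qed

lemma orth_proj_eq_if_scaleR_eq:
  fixes P Q :: "real^'n^'n"
  assumes P: "orth_proj P" and Q: "orth_proj Q" and "a \<noteq> 0" "b \<noteq> 0"
    and eq: "a *\<^sub>R P = b *\<^sub>R Q"
  shows "P = Q"
proof -
  have PP: "transpose P = P" "P ** P = P" and QQ: "transpose Q = Q" "Q ** Q = Q"
    using P Q by (auto simp: orth_proj_def)
  have "a *\<^sub>R (P ** Q) = (a *\<^sub>R P) ** Q" by (rule scalar_matrix_assoc)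
  also have "\<dots> = b *\<^sub>R (Q ** Q)" by (simp add: eq scalar_matrix_assoc)
  also have "\<dots> = a *\<^sub>R P" by (simp add: QQ eq)
  finally have "P ** Q = P" using \<open>a \<noteq> 0\<close> by simp
  have "b *\<^sub>R (Q ** P) = (b *\<^sub>R Q) ** P" by (rule scalar_matrix_assoc)
  also have "\<dots> = a *\<^sub>R (P ** P)" by (simp add: eq scalar_matrix_assoc)
  also have "\<dots> = b *\<^sub>R Q" by (simp add: PP eq)
  finally have "Q ** P = Q" using \<open>b \<noteq> 0\<close> by simp
  with \<open>P ** Q = P\<close> show ?thesis
    by (metis PP(1) QQ(1) matrix_transpose_mul)
qed

lemma orth_proj_complement: "orth_proj Q \<Longrightarrow> orth_proj (mat 1 - Q)"
  by (simp add: orth_proj_def transpose_diff matrix_diff_ldistrib matrix_diff_rdistrib)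

lemma orth_proj_inner_self: "orth_proj P \<Longrightarrow> P \<bullet> P = real (rank P)"
  by (simp add: inner_matrix_eq_trace orth_proj_def orth_proj_trace)

lemma inner_mat_1_orth_proj: "orth_proj P \<Longrightarrow> mat 1 \<bullet> P = real (rank P)"
  by (simp add: inner_matrix_eq_trace orth_proj_trace)

lemma inner_mat_1_self: "(mat 1 :: real^'n^'n) \<bullet> mat 1 = real CARD('n)"
  by (simp add: inner_matrix_eq_trace trace_I)

lemma orth_proj_inner_bounds:
  fixes P Q :: "real^'n^'n"
  assumes P: "orth_proj P" and Q: "orth_proj Q"
  shows "P \<bullet> Q \<le> real (min (rank P) (rank Q))"
    and "real (rank P) + real (rank Q) - real CARD('n) \<le> P \<bullet> Q"
proof -
  have "0 \<le> P \<bullet> (mat 1 - Q)"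
    using orth_proj_inner_nonneg[OF P orth_proj_complement[OF Q]] .
  moreover have "0 \<le> Q \<bullet> (mat 1 - P)"
    using orth_proj_inner_nonneg[OF Q orth_proj_complement[OF P]] .
  ultimately show "P \<bullet> Q \<le> real (min (rank P) (rank Q))"
    using orth_proj_inner_self[OF P] orth_proj_inner_self[OF Q]
      inner_mat_1_orth_proj[OF P] inner_mat_1_orth_proj[OF Q]
    by (simp add: inner_diff_right inner_commute)
  have "0 \<le> (mat 1 - P) \<bullet> (mat 1 - Q)"
    using orth_proj_inner_nonneg[OF orth_proj_complement[OF P] orth_proj_complement[OF Q]] .
  then show "real (rank P) + real (rank Q) - real CARD('n) \<le> P \<bullet> Q"
    using inner_mat_1_orth_proj[OF P] inner_mat_1_orth_proj[OF Q] inner_mat_1_self[where 'n='n]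
    by (simp add: inner_diff_right inner_diff_left inner_commute)
qed

lemma Dw_sq_eq_inner:
  "Dw_sq w P Q = (w (rank P) *\<^sub>R P - w (rank Q) *\<^sub>R Q) \<bullet> (w (rank P) *\<^sub>R P - w (rank Q) *\<^sub>R Q) / 2"
  by (simp add: Dw_sq_def frob_sq_def inner_matrix_eq_trace)

lemma Dw_eq_norm: "Dw w P Q = norm (w (rank P) *\<^sub>R P - w (rank Q) *\<^sub>R Q) / sqrt 2"
  by (simp add: Dw_def Dw_sq_eq_inner real_sqrt_divide norm_eq_sqrt_inner)

lemma Dw_sq_orth_proj:
  fixes P Q :: "real^'n^'n"
  assumes "orth_proj P" and "orth_proj Q"
  shows "Dw_sq w P Q = mw w (rank P) (rank Q) - w (rank P) * w (rank Q) * (P \<bullet> Q)"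
  using orth_proj_inner_self[OF assms(1)] orth_proj_inner_self[OF assms(2)]
  by (simp add: Dw_sq_eq_inner mw_def inner_diff_left inner_diff_right inner_commute[of Q P]
      power2_eq_square algebra_simps divide_simps)

lemma Metric_space_Dw:
  fixes w :: "nat \<Rightarrow> real"
  assumes wpos: "\<And>k. k \<le> CARD('n) \<Longrightarrow> w k > 0"
  shows "Metric_space {P :: real^'n^'n. orth_proj P} (Dw w)"
proof
  fix P Q R :: "real^'n^'n"
  show "0 \<le> Dw w P Q" by (simp add: Dw_eq_norm)
  show "Dw w P Q = Dw w Q P" by (simp add: Dw_eq_norm norm_minus_commute)
  let ?f = "\<lambda>P :: real^'n^'n. w (rank P) *\<^sub>R P"
  have "norm (?f P - ?f R) \<le> norm (?f P - ?f Q) + norm (?f Q - ?f R)"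
    using norm_triangle_ineq[of "?f P - ?f Q" "?f Q - ?f R"] by simp
  then show "Dw w P R \<le> Dw w P Q + Dw w Q R"
    by (simp add: Dw_eq_norm add_divide_distrib[symmetric] divide_right_mono)
  assume "P \<in> {P. orth_proj P}" and "Q \<in> {P. orth_proj P}"
  moreover have "w (rank P) \<noteq> 0" "w (rank Q) \<noteq> 0"
    using wpos[OF rank_le_CARD] by (metis less_irrefl)+
  ultimately show "Dw w P Q = 0 \<longleftrightarrow> P = Q"
    using orth_proj_eq_if_scaleR_eq by (auto simp: Dw_eq_norm)
qed

lemma Dw_sq_bounds:
  fixes P Q :: "real^'n^'n"
  assumes wpos: "\<And>k. k \<le> CARD('n) \<Longrightarrow> w k > 0"
    and P: "orth_proj P" and Q: "orth_proj Q"
  shows "mw w (rank P) (rank Q) - w (rank P) * w (rank Q) * real (min (rank P) (rank Q))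
      \<le> Dw_sq w P Q"
    and "Dw_sq w P Q \<le> mw w (rank P) (rank Q)
      + w (rank P) * w (rank Q) * min (real CARD('n) - real (rank P) - real (rank Q)) 0"
proof -
  have "0 < w (rank P)" "0 < w (rank Q)" using wpos rank_le_CARD by blast+
  then have c: "0 \<le> w (rank P) * w (rank Q)" by simp
  show "mw w (rank P) (rank Q) - w (rank P) * w (rank Q) * real (min (rank P) (rank Q))
      \<le> Dw_sq w P Q"
    using mult_left_mono[OF orth_proj_inner_bounds(1)[OF P Q] c]
    by (simp add: Dw_sq_orth_proj[OF P Q])
  have "- min (real CARD('n) - real (rank P) - real (rank Q)) 0 \<le> P \<bullet> Q"
    using orth_proj_inner_bounds(2)[OF P Q] orth_proj_inner_nonneg[OF P Q] by linarith
  from mult_left_mono[OF this c]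
  show "Dw_sq w P Q \<le> mw w (rank P) (rank Q)
      + w (rank P) * w (rank Q) * min (real CARD('n) - real (rank P) - real (rank Q)) 0"
    by (simp add: Dw_sq_orth_proj[OF P Q])
qed

definition coord_proj :: "'n set \<Rightarrow> real^'n^'n" where
  "coord_proj S = (\<chi> i j. of_bool (i = j \<and> i \<in> S))"

lemma coord_proj_mult:
  fixes S T :: "'n::finite set"
  shows "coord_proj S ** coord_proj T = coord_proj (S \<inter> T)"
proof -
  have "(\<Sum>k\<in>UNIV. of_bool (i = k \<and> i \<in> S) * of_bool (k = j \<and> k \<in> T))
      = (of_bool (i = j \<and> i \<in> S \<inter> T) :: real)" for i j
  proof -
    have "(\<Sum>k\<in>UNIV. of_bool (i = k \<and> i \<in> S) * of_bool (k = j \<and> k \<in> T))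
        = (\<Sum>k\<in>UNIV. if k = i then of_bool (i = j \<and> i \<in> S \<inter> T) else (0 :: real))"
      by (intro sum.cong) auto
    then show ?thesis by simp
  qed
  then show ?thesis by (simp add: coord_proj_def matrix_matrix_mult_def vec_eq_iff)
qed

lemma transpose_coord_proj: "transpose (coord_proj S) = coord_proj S"
  by (auto simp: coord_proj_def transpose_def vec_eq_iff)

lemma orth_proj_coord_proj: "orth_proj (coord_proj S)"
  by (simp add: orth_proj_def transpose_coord_proj coord_proj_mult)

lemma trace_coord_proj: "trace (coord_proj S) = real (card S)"
  by (simp add: trace_def coord_proj_def)

lemma inner_coord_proj: "coord_proj S \<bullet> coord_proj T = real (card (S \<inter> T))"
  by (simp add: inner_matrix_eq_trace transpose_coord_proj coord_proj_mult trace_coord_proj)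

lemma rank_coord_proj: "rank (coord_proj S) = card S"
  using orth_proj_trace[OF orth_proj_coord_proj[of S]] trace_coord_proj[of S] by simp

lemma ex_subsets_card_Int:
  assumes "j \<le> k1" "j \<le> k2" "k1 + k2 \<le> CARD('a) + j"
  shows "\<exists>S T :: 'a::finite set. card S = k1 \<and> card T = k2 \<and> card (S \<inter> T) = j"
proof -
  obtain h :: "nat \<Rightarrow> 'a" where "bij_betw h {0..<CARD('a)} UNIV"
    using ex_bij_betw_nat_finite[of "UNIV :: 'a set"] by auto
  then have inj: "inj_on h {0..<CARD('a)}" by (rule bij_betw_imp_inj_on)
  define A B where "A = {0..<k1}" and "B = {k1 - j..<k1 - j + k2}"
  have sub: "A \<subseteq> {0..<CARD('a)}" "B \<subseteq> {0..<CARD('a)}"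
    using assms by (auto simp: A_def B_def)
  have card_h: "card (h ` C) = card C" if "C \<subseteq> {0..<CARD('a)}" for C
    using card_image[OF inj_on_subset[OF inj that]] .
  have "A \<inter> B = {k1 - j..<k1}" using assms by (auto simp: A_def B_def)
  then have "card (h ` A \<inter> h ` B) = j"
    using inj_on_image_Int[OF inj sub] card_h[of "A \<inter> B"] sub assms by auto
  moreover have "card (h ` A) = k1" "card (h ` B) = k2"
    using card_h sub by (auto simp: A_def B_def)
  ultimately show ?thesis by blast
qed

lemma ex_orth_proj_pair_rank_inner:
  assumes "j \<le> k1" "j \<le> k2" "k1 + k2 \<le> CARD('n) + j"
  shows "\<exists>P Q :: real^'n^'n. orth_proj P \<and> orth_proj Q \<and> rank P = k1 \<and> rank Q = k2
    \<and> P \<bullet> Q = real j"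
proof -
  obtain S T :: "'n set" where "card S = k1" "card T = k2" "card (S \<inter> T) = j"
    using ex_subsets_card_Int[OF assms] by blast
  then show ?thesis
    by (intro exI[of _ "coord_proj S"] exI[of _ "coord_proj T"])
      (simp add: orth_proj_coord_proj rank_coord_proj inner_coord_proj)
qed

theorem proposition2p1:
  fixes w :: "nat \<Rightarrow> real"
  assumes wpos: "\<And>k. k \<le> CARD('n) \<Longrightarrow> w k > 0"
  shows "Metric_space {P :: real^'n^'n. orth_proj P} (Dw w)
    \<and> (\<forall>P1 P2 :: real^'n^'n. orth_proj P1 \<and> orth_proj P2 \<longrightarrow>
          mw w (rank P1) (rank P2) - w (rank P1) * w (rank P2) * real (min (rank P1) (rank P2))
            \<le> Dw_sq w P1 P2
        \<and> Dw_sq w P1 P2 \<le> mw w (rank P1) (rank P2)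
            + w (rank P1) * w (rank P2) * min (real CARD('n) - real (rank P1) - real (rank P2)) 0)
    \<and> (\<forall>k1 k2. k1 \<le> CARD('n) \<and> k2 \<le> CARD('n) \<longrightarrow>
          (\<exists>P1 P2 :: real^'n^'n. orth_proj P1 \<and> orth_proj P2 \<and> rank P1 = k1 \<and> rank P2 = k2 \<and>
             Dw_sq w P1 P2 = mw w k1 k2 - w k1 * w k2 * real (min k1 k2))
        \<and> (\<exists>P1 P2 :: real^'n^'n. orth_proj P1 \<and> orth_proj P2 \<and> rank P1 = k1 \<and> rank P2 = k2 \<and>
             Dw_sq w P1 P2 = mw w k1 k2 + w k1 * w k2 * min (real CARD('n) - real k1 - real k2) 0))"
proof (intro conjI allI impI)
  show "Metric_space {P :: real^'n^'n. orth_proj P} (Dw w)"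
    using wpos by (rule Metric_space_Dw)
next
  fix P1 P2 :: "real^'n^'n"
  assume "orth_proj P1 \<and> orth_proj P2"
  then show "mw w (rank P1) (rank P2) - w (rank P1) * w (rank P2) * real (min (rank P1) (rank P2))
      \<le> Dw_sq w P1 P2"
    and "Dw_sq w P1 P2 \<le> mw w (rank P1) (rank P2)
      + w (rank P1) * w (rank P2) * min (real CARD('n) - real (rank P1) - real (rank P2)) 0"
    using Dw_sq_bounds[OF wpos] by auto
next
  fix k1 k2
  assume "k1 \<le> CARD('n) \<and> k2 \<le> CARD('n)"
  then have nested: "min k1 k2 \<le> k1" "min k1 k2 \<le> k2" "k1 + k2 \<le> CARD('n) + min k1 k2"
    and spread: "k1 + k2 - CARD('n) \<le> k1" "k1 + k2 - CARD('n) \<le> k2"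
      "k1 + k2 \<le> CARD('n) + (k1 + k2 - CARD('n))"
    and spread_inner: "real (k1 + k2 - CARD('n)) = - min (real CARD('n) - real k1 - real k2) 0"
    by (auto simp: min_def of_nat_diff)
  show "\<exists>P1 P2 :: real^'n^'n. orth_proj P1 \<and> orth_proj P2 \<and> rank P1 = k1 \<and> rank P2 = k2 \<and>
      Dw_sq w P1 P2 = mw w k1 k2 - w k1 * w k2 * real (min k1 k2)"
    using ex_orth_proj_pair_rank_inner[OF nested] by (metis Dw_sq_orth_proj)
  obtain P Q :: "real^'n^'n" where "orth_proj P" "orth_proj Q" "rank P = k1" "rank Q = k2"
    and "P \<bullet> Q = - min (real CARD('n) - real k1 - real k2) 0"
    using ex_orth_proj_pair_rank_inner[OF spread] spread_inner by metis
  then show "\<exists>P1 P2 :: real^'n^'n. orth_proj P1 \<and> orth_proj P2 \<and> rank P1 = k1 \<and> rank P2 = k2 \<and>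
      Dw_sq w P1 P2 = mw w k1 k2 + w k1 * w k2 * min (real CARD('n) - real k1 - real k2) 0"
    by (intro exI[of _ P] exI[of _ Q]) (simp add: Dw_sq_orth_proj)
qed

end
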